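(* Let $q$ be a prime power and let $n\ge 3$ be an odd integer. Let $d\in D_n$, let $\beta$ be a primitive $d$-th root of unity over $\mathbb{F}_{q^2}$, and let $f_\beta(x)=\prod_{i=0}^{n-1}(x-\beta^{q^{2i}})$. Then $f_\beta(x)$ is a SCRIM polynomial over $\mathbb{F}_{q^2}$ of degree $n$ and order $d$.
   Context: $D_n$ denotes the set of all positive divisors of $q^n+1$ that do not divide $q^k+1$ for any integer $0\le k<n$. For $f(x)\in\mathbb{F}_{q^2}[x]$ of degree $m$ with $f(0)\neq0$, the reciprocal is $f^*(x)=x^m f(0)^{-1}f(1/x)$, the conjugate of $g(x)=\sum g_ix^i$ is $\overline{g(x)}=\sum g_i^q x^i$, and the conjugate-reciprocal is $f^\dagger(x)=\overline{f^*(x)}$. A polynomial $f$ with $f(0)\ne 0$ is SCRIM if $f=f^\dagger$ and $f$ is irreducible and monic. The order of $f$ is the smallest positive integer $s$ such that $f(x)$ divides $x^s-1$. *)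

theory Defs
  imports "HOL-Computational_Algebra.Computational_Algebra"
begin

definition D_set :: "nat \<Rightarrow> nat \<Rightarrow> nat set" where
  "D_set q n = {d. 0 < d \<and> d dvd q ^ n + 1 \<and> (\<forall>k<n. \<not> d dvd q ^ k + 1)}"

definition recip_poly :: "'a::field poly \<Rightarrow> 'a poly" where
  "recip_poly f = smult (inverse (coeff f 0)) (reflect_poly f)"

definition conj_poly :: "nat \<Rightarrow> 'a::field poly \<Rightarrow> 'a poly" where
  "conj_poly q g = map_poly (\<lambda>c. c ^ q) g"

definition conj_recip :: "nat \<Rightarrow> 'a::field poly \<Rightarrow> 'a poly" where
  "conj_recip q f = conj_poly q (recip_poly f)"

text \<open>SCRIM over F_{q^2} (the coefficient field 'a).\<close>
definition SCRIM :: "nat \<Rightarrow> 'a::field poly \<Rightarrow> bool" where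
  "SCRIM q f \<longleftrightarrow> coeff f 0 \<noteq> 0 \<and> f = conj_recip q f \<and> irreducible f \<and> lead_coeff f = 1"

definition poly_ord :: "'a::field poly \<Rightarrow> nat" where
  "poly_ord f = (LEAST s. 0 < s \<and> f dvd (monom 1 s - 1))"

definition primitive_root :: "nat \<Rightarrow> 'b::field \<Rightarrow> bool" where
  "primitive_root d b \<longleftrightarrow> 0 < d \<and> b ^ d = 1 \<and> (\<forall>j. 0 < j \<and> j < d \<longrightarrow> b ^ j \<noteq> 1)"

end

(*
  The roots of f_beta form the orbit of beta under the Frobenius x |-> x^(q^2) of F_{q^2}.
  For odd n and d in D_n, q^2 has order exactly n modulo d, so the orbit has n elements.
  Being stable under this Frobenius, f_beta has its coefficients in F_{q^2}; it is irreducible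
  because every polynomial over F_{q^2} vanishing at beta vanishes on the whole orbit, and its
  order is d because beta is a primitive d-th root of unity. Finally beta^(q^n) = 1/beta, so
  x |-> (1/x)^q is the power x |-> x^(q^(n+1)) = x^((q^2)^((n+1)/2)) of the Frobenius; it
  permutes the orbit, and that is exactly the statement that f_beta is self-conjugate-reciprocal.
*)
theory Submission
  imports Defs "HOL-Number_Theory.Pocklington" "Berlekamp_Zassenhaus.Finite_Field"
begin

lemma coprime_if_dvd_power_plus_one:
  fixes d q n :: nat
  assumes "d dvd q ^ n + 1" and "0 < n"
  shows "coprime d q"
proof -
  have "coprime (q ^ n + 1) q"
    using assms(2) by (metis coprime_add_one_left coprime_power_right_iff order.strict_iff_not)
  then show ?thesis
    using assms(1) by (metis coprime_divisors gcd_nat.refl)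
qed

lemma cong_square_power_if_dvd_power_plus_one:
  fixes d q n :: nat
  assumes "d dvd q ^ n + 1"
  shows "[(q ^ 2) ^ n = 1] (mod d)"
proof -
  have "[int q ^ n + 1 = 0] (mod int d)"
    using assms unfolding cong_0_iff by (metis of_nat_1 of_nat_add of_nat_dvd_iff of_nat_power)
  then have "[int q ^ n = - 1] (mod int d)"
    by (metis add_diff_cancel_right' cong_diff cong_refl diff_0)
  then have "[(int q ^ n) ^ 2 = (- 1) ^ 2] (mod int d)"
    by (rule cong_pow)
  then have "[int ((q ^ 2) ^ n) = int 1] (mod int d)"
    by (simp add: power_mult_distrib flip: power_mult mult.commute)
  then show ?thesis
    by (simp only: cong_int_iff)
qed

text \<open>Since \<open>n\<close> is odd, an order \<open>s < n\<close> of \<open>q\<^sup>2\<close> would divide \<open>n\<close> with odd cofactor, giving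
  \<open>q\<^sup>n \<equiv> q\<^sup>s\<close> and hence \<open>d dvd q\<^sup>s + 1\<close>, which the definition of \<open>D_set\<close> excludes.\<close>
theorem ord_square_eq_if_D_set:
  assumes D: "d \<in> D_set q n" and "odd n"
  shows "ord d (q ^ 2) = n"
proof -
  have d: "d dvd q ^ n + 1" and not_dvd: "\<And>k. k < n \<Longrightarrow> \<not> d dvd q ^ k + 1"
    using D by (auto simp: D_set_def)
  have "0 < n" using \<open>odd n\<close> by (simp add: odd_pos)
  define s where "s = ord d (q ^ 2)"
  have "coprime d (q ^ 2)"
    using coprime_if_dvd_power_plus_one[OF d \<open>0 < n\<close>] by simp
  then have "0 < s" by (simp add: s_def coprime_commute)
  have "s dvd n"
    using cong_square_power_if_dvd_power_plus_one[OF d] by (simp add: s_def ord_divides')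
  then obtain r where "n = s * r" ..
  moreover from this have "odd r" using \<open>odd n\<close> by simp
  then obtain t where "r = 2 * t + 1" by (rule oddE)
  ultimately have n_eq: "n = s + 2 * s * t" by (simp add: algebra_simps)
  have "[(q ^ 2) ^ s = 1] (mod d)"
    using ord by (simp add: s_def)
  then have "[q ^ s * ((q ^ 2) ^ s) ^ t = q ^ s * 1 ^ t] (mod d)"
    by (intro cong_mult cong_pow cong_refl)
  then have "[q ^ n + 1 = q ^ s + 1] (mod d)"
    by (intro cong_add cong_refl) (simp add: n_eq power_add flip: power_mult mult.assoc)
  then have "d dvd q ^ s + 1"
    using d by (metis cong_0_iff cong_sym cong_trans)
  then have "\<not> s < n" using not_dvd by blast
  then show ?thesis
    using dvd_imp_le[OF \<open>s dvd n\<close> \<open>0 < n\<close>] s_def by simp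
qed

lemma primitive_root_pow_eq_1_iff:
  assumes "primitive_root d (b :: 'b::field)"
  shows "b ^ a = 1 \<longleftrightarrow> d dvd a"
proof -
  have "0 < d" and "b ^ d = 1" and minimal: "\<And>j. 0 < j \<Longrightarrow> j < d \<Longrightarrow> b ^ j \<noteq> 1"
    using assms by (auto simp: primitive_root_def)
  have "b ^ a = b ^ (d * (a div d) + a mod d)"
    by simp
  also have "\<dots> = (b ^ d) ^ (a div d) * b ^ (a mod d)"
    by (simp only: power_add power_mult)
  finally have "b ^ a = b ^ (a mod d)"
    using \<open>b ^ d = 1\<close> by simp
  moreover have "a mod d < d"
    using \<open>0 < d\<close> by simp
  ultimately have "b ^ a = 1 \<longleftrightarrow> a mod d = 0"
    using minimal[of "a mod d"] by auto
  then show ?thesis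
    by (simp add: dvd_eq_mod_eq_0)
qed

lemma primitive_root_pow_eq_pow_iff:
  assumes "primitive_root d (b :: 'b::field)"
  shows "b ^ a = b ^ c \<longleftrightarrow> [a = c] (mod d)"
proof -
  have "b \<noteq> 0"
    using assms by (auto simp: primitive_root_def power_0_left)
  have ordered: "b ^ a = b ^ c \<longleftrightarrow> [c = a] (mod d)" if "a \<le> c" for a c
  proof -
    have "b ^ c = b ^ a * b ^ (c - a)"
      using that by (simp flip: power_add)
    then have "b ^ a = b ^ c \<longleftrightarrow> b ^ (c - a) = 1"
      using \<open>b \<noteq> 0\<close> by auto
    also have "\<dots> \<longleftrightarrow> [c = a] (mod d)"
      using primitive_root_pow_eq_1_iff[OF assms] cong_altdef_nat[OF that] by simp
    finally show ?thesis .
  qed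
  show ?thesis
  proof (cases "a \<le> c")
    case True
    then show ?thesis using ordered[of a c] cong_sym_eq by blast
  next
    case False
    then show ?thesis using ordered[of c a] by auto
  qed
qed

lemma field_hom_of_add_mult:
  fixes f :: "'a::field \<Rightarrow> 'b::field"
  assumes "f 1 = 1" and "\<And>x y. f (x + y) = f x + f y" and "\<And>x y. f (x * y) = f x * f y"
  shows "field_hom f"
proof -
  have "f 0 = 0"
    using assms(2)[of 0 0] by (metis add.right_neutral add_left_cancel)
  then show ?thesis
    by unfold_locales (use assms in auto)
qed

lemma CHAR_eq_if_field_hom:
  assumes "field_hom (f :: 'a::field \<Rightarrow> 'b::field)"
  shows "CHAR('b) = CHAR('a)"
proof (rule CHAR_eqI)
  interpret field_hom f by fact
  show "of_nat CHAR('a) = (0 :: 'b)"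
    by (metis hom_of_nat hom_zero of_nat_CHAR)
  show "CHAR('a) dvd m" if "of_nat m = (0 :: 'b)" for m
    using that by (metis hom_of_nat hom_0_iff of_nat_eq_0_iff_char_dvd)
qed

lemma field_hom_power_CHAR_power:
  assumes "prime CHAR('b::field)" and "m = CHAR('b) ^ e"
  shows "field_hom (\<lambda>x :: 'b. x ^ m)"
  by unfold_locales (use assms in \<open>auto simp: power_mult_distrib freshmans_dream' prime_gt_0_nat\<close>)

lemma CHAR_eq_if_CARD_eq_prime_power:
  assumes "prime p" and "CARD('a::{field,finite}) = p ^ m"
  shows "CHAR('a) = p"
proof -
  have "prime CHAR('a)"
    by (rule prime_CHAR_semidom) (simp add: finite_imp_CHAR_pos)
  moreover have "CHAR('a) dvd p ^ m"
    using CHAR_dvd_CARD[where 'a = 'a] assms(2) by simp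
  ultimately show ?thesis
    using assms(1) by (metis prime_dvd_power primes_dvd_imp_eq)
qed

lemma power_CARD_eq_self:
  fixes x :: "'a::{field,finite}"
  shows "x ^ CARD('a) = x"
proof (cases "x = 0")
  case False
  let ?U = "UNIV - {0 :: 'a}"
  have "bij_betw (\<lambda>y. x * y) ?U ?U"
    by (rule bij_betwI[where g = "\<lambda>y. y / x"]) (use False in auto)
  then have "(\<Prod>y\<in>?U. x * y) = (\<Prod>y\<in>?U. y)"
    by (rule prod.reindex_bij_betw)
  then have "x ^ card ?U * (\<Prod>y\<in>?U. y) = 1 * (\<Prod>y\<in>?U. y)"
    by (simp add: prod.distrib)
  then have "x ^ card ?U = 1"
    by (subst (asm) mult_cancel_right) (simp add: prod_zero_iff)
  moreover have "CARD('a) = Suc (card ?U)"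
    using finite_UNIV_card_ge_0[where ?'a = 'a] by (simp add: card_Diff_singleton)
  ultimately show ?thesis
    by (simp only: power_Suc mult_1_right)
qed (simp add: finite_UNIV_card_ge_0)

lemma range_field_hom_eq_fixed_points:
  fixes emb :: "'a::{field,finite} \<Rightarrow> 'b::field"
  assumes "field_hom emb"
  shows "range emb = {x. x ^ CARD('a) = x}"
proof -
  interpret field_hom emb by fact
  define P :: "'b poly" where "P = Polynomial.monom 1 CARD('a) + [:0, -1:]"
  have "card {0 :: 'a, 1} \<le> CARD('a)"
    by (rule card_mono) auto
  then have "2 \<le> CARD('a)"
    by simp
  then have "degree P = CARD('a)"
    unfolding P_def by (subst degree_add_eq_left) (auto simp: degree_monom_eq)
  then have "P \<noteq> 0"
    using \<open>2 \<le> CARD('a)\<close> by auto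
  have roots: "{x. x ^ CARD('a) = x} = {x. poly P x = 0}"
    by (auto simp: P_def poly_monom)
  have "range emb \<subseteq> {x. x ^ CARD('a) = x}"
    by (auto simp: power_CARD_eq_self simp flip: hom_power)
  moreover have "card {x :: 'b. x ^ CARD('a) = x} \<le> card (range emb)"
    using card_poly_roots_bound[OF \<open>P \<noteq> 0\<close>] \<open>degree P = CARD('a)\<close>
    by (simp add: roots card_image[OF inj_f])
  ultimately show ?thesis
    using card_seteq[OF poly_roots_finite[OF \<open>P \<noteq> 0\<close>]] by (simp add: roots)
qed

lemma ex_map_poly_eq_if_fixed_by_power_CARD:
  fixes emb :: "'a::{field,finite} \<Rightarrow> 'b::field"
  assumes "field_hom emb" and "map_poly (\<lambda>x. x ^ CARD('a)) G = G"
  shows "\<exists>g. map_poly emb g = G"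
proof -
  interpret field_hom emb by fact
  have "Polynomial.coeff G i ^ CARD('a) = Polynomial.coeff G i" for i
    using arg_cong[OF assms(2), of "\<lambda>P. Polynomial.coeff P i"] by (simp add: coeff_map_poly)
  then have coeff_in_range: "Polynomial.coeff G i \<in> range emb" for i
    using range_field_hom_eq_fixed_points[OF assms(1)] by blast
  have "map_poly emb (map_poly (inv_into UNIV emb) G) = G"
    by (rule poly_eqI) (simp add: coeff_map_poly inv_into_f_eq[OF inj_f] f_inv_into_f[OF coeff_in_range])
  then show ?thesis ..
qed

lemma degree_prod_linear:
  assumes "finite S"
  shows "degree (\<Prod>x\<in>S. [:- x, 1 :: 'b::idom:]) = card S"
  using assms by (subst degree_prod_eq_sum_degree) auto

lemma coeff_0_prod_linear: "Polynomial.coeff (\<Prod>x\<in>S. [:- x, 1 :: 'b::comm_ring_1:]) 0 = (\<Prod>x\<in>S. - x)"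
  by (simp add: poly_prod flip: poly_0_coeff_0)

lemma prod_linear_dvd_if_roots:
  fixes S :: "'b::field set"
  assumes "finite S" and "\<forall>x\<in>S. poly P x = 0"
  shows "(\<Prod>x\<in>S. [:- x, 1:]) dvd P"
  using assms
proof (induction S arbitrary: P rule: finite_induct)
  case (insert a S)
  obtain P' where P': "P = [:- a, 1:] * P'"
    using insert.prems poly_eq_0_iff_dvd by blast
  have "\<forall>x\<in>S. poly P' x = 0"
    using insert P' by auto
  then have "(\<Prod>x\<in>S. [:- x, 1:]) dvd P'"
    by (rule insert.IH)
  then show ?case
    unfolding P' prod.insert[OF insert.hyps] by (rule mult_dvd_mono[OF dvd_refl])
qed simp

lemma map_poly_prod_linear:
  assumes "field_hom f"
  shows "map_poly f (\<Prod>x\<in>S. [:- h x, 1:]) = (\<Prod>x\<in>S. [:- f (h x), 1:])"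
proof -
  interpret field_hom f by fact
  interpret map_poly_idom_hom f ..
  show ?thesis by (simp add: hom_prod hom_distribs)
qed

lemma prod_linear_eq_if_maps_into:
  assumes "finite S" and "inj_on h S" and "h ` S \<subseteq> S"
  shows "(\<Prod>x\<in>S. [:- h x, 1:]) = (\<Prod>x\<in>S. [:- x, 1 :: 'b::comm_ring_1:])"
  using prod.reindex[OF assms(2), of "\<lambda>x. [:- x, 1:]"] endo_inj_surj[OF assms(1,3,2)] by simp

lemma recip_poly_prod_linear:
  fixes S :: "'b::field set"
  assumes "finite S" and "0 \<notin> S"
  shows "recip_poly (\<Prod>x\<in>S. [:- x, 1:]) = (\<Prod>x\<in>S. [:- inverse x, 1:])"
proof -
  have "reflect_poly (\<Prod>x\<in>S. [:- x, 1:]) = (\<Prod>x\<in>S. [:1, - x:])"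
    unfolding reflect_poly_prod by (rule prod.cong) (simp_all add: reflect_poly_def cCons_def)
  also have "\<dots> = (\<Prod>x\<in>S. Polynomial.smult (- x) [:- inverse x, 1:])"
    by (rule prod.cong) (use assms(2) in \<open>auto intro: right_inverse dest: sym\<close>)
  also have "\<dots> = Polynomial.smult (\<Prod>x\<in>S. - x) (\<Prod>x\<in>S. [:- inverse x, 1:])"
    by (rule prod_smult)
  finally show ?thesis
    using assms by (simp add: recip_poly_def coeff_0_prod_linear prod_zero_iff)
qed

lemma map_poly_recip_poly:
  assumes "field_hom f"
  shows "map_poly f (recip_poly g) = recip_poly (map_poly f g)"
proof -
  interpret field_hom f by fact
  have "map_poly f (reflect_poly g) = reflect_poly (map_poly f g)"
    by (rule poly_eqI) (simp add: coeff_reflect_poly)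
  then show ?thesis
    by (simp add: recip_poly_def map_poly_hom_smult hom_inverse)
qed

lemma map_poly_conj_poly:
  assumes "field_hom f" and "0 < q"
  shows "map_poly f (conj_poly q g) = conj_poly q (map_poly f g)"
proof -
  interpret field_hom f by fact
  show ?thesis
    using assms(2) by (intro poly_eqI) (simp add: conj_poly_def coeff_map_poly hom_power)
qed

text \<open>Over the extension, the conjugate-reciprocal of \<open>\<Prod>(x - \<alpha>)\<close> has the roots \<open>(1/\<alpha>)\<^sup>q\<close>.\<close>
lemma conj_recip_eq_self_if_closed:
  fixes emb :: "'a::field \<Rightarrow> 'b::field"
  assumes "field_hom emb" and frob: "field_hom (\<lambda>x :: 'b. x ^ q)"
    and "finite S" and "0 \<notin> S" and closed: "(\<lambda>x. inverse x ^ q) ` S \<subseteq> S"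
    and g: "map_poly emb g = (\<Prod>x\<in>S. [:- x, 1:])"
  shows "conj_recip q g = g"
proof -
  interpret e: field_hom emb by fact
  interpret m: map_poly_inj_idom_hom emb ..
  interpret frob: field_hom "\<lambda>x :: 'b. x ^ q" by (fact frob)
  have "0 < q"
    using frob.hom_zero by (cases q) auto
  have "inj (\<lambda>x :: 'b. inverse x ^ q)"
    by (rule injI) (metis frob.inj_f injD inverse_inverse_eq)
  have "map_poly emb (conj_recip q g) = conj_poly q (\<Prod>x\<in>S. [:- inverse x, 1:])"
    unfolding conj_recip_def
    by (simp add: map_poly_conj_poly[OF assms(1) \<open>0 < q\<close>] map_poly_recip_poly[OF assms(1)] g
        recip_poly_prod_linear[OF \<open>finite S\<close> \<open>0 \<notin> S\<close>])
  also have "\<dots> = (\<Prod>x\<in>S. [:- (inverse x ^ q), 1:])"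
    unfolding conj_poly_def by (rule map_poly_prod_linear[OF frob])
  also have "\<dots> = map_poly emb g"
    using prod_linear_eq_if_maps_into[OF \<open>finite S\<close> inj_on_subset[OF \<open>inj _\<close> subset_UNIV] closed] g
    by simp
  finally show ?thesis
    by (simp add: m.eq_iff)
qed

lemma poly_map_poly_root_power_CARD:
  fixes emb :: "'a::{field,finite} \<Rightarrow> 'b::field"
  assumes "field_hom emb" and "field_hom (\<lambda>x :: 'b. x ^ CARD('a))"
    and "poly (map_poly emb a) x = 0"
  shows "poly (map_poly emb a) (x ^ CARD('a)) = 0"
proof -
  interpret e: field_hom emb by fact
  interpret frob: field_hom "\<lambda>x :: 'b. x ^ CARD('a)" by fact
  have "map_poly (\<lambda>x. x ^ CARD('a)) (map_poly emb a) = map_poly emb a"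
    by (rule poly_eqI) (simp add: coeff_map_poly power_CARD_eq_self flip: e.hom_power)
  then show ?thesis
    using frob.poly_map_poly[of "map_poly emb a" x] assms(3) by simp
qed

lemma irreducible_if_minimal_root_degree:
  fixes emb :: "'a::field \<Rightarrow> 'b::field"
  assumes "field_hom emb" and "0 < degree g" and root: "poly (map_poly emb g) \<beta> = 0"
    and minimal: "\<And>a. a \<noteq> 0 \<Longrightarrow> poly (map_poly emb a) \<beta> = 0 \<Longrightarrow> degree g \<le> degree a"
  shows "irreducible g"
proof (rule irreducibleI)
  interpret e: field_hom emb by fact
  interpret m: map_poly_inj_idom_hom emb ..
  show "g \<noteq> 0" and "\<not> g dvd 1"
    using assms(2) by (auto simp: is_unit_iff_degree)
  fix a b assume g: "g = a * b"
  then have "a \<noteq> 0" "b \<noteq> 0" and degree_sum: "degree a + degree b = degree g"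
    using \<open>g \<noteq> 0\<close> by (auto simp: degree_mult_eq)
  have "poly (map_poly emb a) \<beta> = 0 \<or> poly (map_poly emb b) \<beta> = 0"
    using root by (simp add: g m.hom_mult)
  then have "degree a = 0 \<or> degree b = 0"
    using minimal[OF \<open>a \<noteq> 0\<close>] minimal[OF \<open>b \<noteq> 0\<close>] degree_sum by auto
  then show "a dvd 1 \<or> b dvd 1"
    using \<open>a \<noteq> 0\<close> \<open>b \<noteq> 0\<close> by (auto simp: is_unit_iff_degree)
qed

lemma poly_ord_eq_if_splits_into_roots_of_unity:
  fixes emb :: "'a::field \<Rightarrow> 'b::field"
  assumes "field_hom emb" and g: "map_poly emb g = (\<Prod>x\<in>S. [:- x, 1:])" and "finite S"
    and "\<beta> \<in> S" and prim: "primitive_root d \<beta>" and unity: "\<forall>x\<in>S. x ^ d = 1"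
  shows "poly_ord g = d"
proof -
  interpret e: field_hom emb by fact
  interpret m: map_poly_inj_idom_divide_hom emb ..
  have "map_poly emb (Polynomial.monom 1 s - 1) = Polynomial.monom 1 s - 1" for s
    by (simp add: hom_distribs)
  then have dvd_iff: "g dvd Polynomial.monom 1 s - 1
      \<longleftrightarrow> (\<Prod>x\<in>S. [:- x, 1:]) dvd Polynomial.monom 1 s - 1" for s
    using m.hom_dvd_iff[of g "Polynomial.monom 1 s - 1"] by (simp only: g)
  have "(\<Prod>x\<in>S. [:- x, 1:]) dvd Polynomial.monom 1 d - 1"
    using prod_linear_dvd_if_roots[OF \<open>finite S\<close>] unity by (simp add: poly_monom)
  moreover have "d dvd s" if "(\<Prod>x\<in>S. [:- x, 1:]) dvd Polynomial.monom 1 s - 1" for s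
  proof -
    have "[:- \<beta>, 1:] dvd Polynomial.monom 1 s - 1"
      using dvd_prodI[OF \<open>finite S\<close> \<open>\<beta> \<in> S\<close>, of "\<lambda>x. [:- x, 1:]"] that by (rule dvd_trans)
    then have "\<beta> ^ s = 1"
      by (simp add: poly_eq_0_iff_dvd [symmetric] poly_monom)
    then show ?thesis
      using primitive_root_pow_eq_1_iff[OF prim] by simp
  qed
  moreover have "0 < d"
    using prim by (simp add: primitive_root_def)
  ultimately show ?thesis
    unfolding poly_ord_def dvd_iff by (intro Least_equality) (auto intro: dvd_imp_le)
qed

locale conjugate_orbit =
  fixes q n d :: nat and \<beta> :: "'b::field"
  assumes D: "d \<in> D_set q n" and n_odd: "odd n" and prim: "primitive_root d \<beta>"
begin

definition conjugate :: "nat \<Rightarrow> 'b" where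
  "conjugate i = \<beta> ^ q ^ (2 * i)"

definition orbit :: "'b set" where
  "orbit = conjugate ` {..<n}"

lemma n_pos: "0 < n"
  using n_odd by (simp add: odd_pos)

lemma conjugate_eq_iff: "conjugate i = conjugate j \<longleftrightarrow> [i = j] (mod n)"
proof -
  have "coprime d q"
    using D n_pos by (auto simp: D_set_def intro: coprime_if_dvd_power_plus_one)
  then have "coprime d (q ^ 2)"
    by simp
  have "conjugate i = conjugate j \<longleftrightarrow> [(q ^ 2) ^ i = (q ^ 2) ^ j] (mod d)"
    unfolding conjugate_def by (simp add: primitive_root_pow_eq_pow_iff[OF prim] power_mult)
  also have "\<dots> \<longleftrightarrow> [i = j] (mod ord d (q ^ 2))"
    by (rule order_divides_expdiff) fact
  finally show ?thesis
    by (simp add: ord_square_eq_if_D_set[OF D n_odd])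
qed

lemma conjugate_Suc: "conjugate i ^ q ^ 2 = conjugate (Suc i)"
  by (simp add: conjugate_def flip: power_mult power_add)

lemma inverse_conjugate_power: "inverse (conjugate i) ^ q = conjugate (i + (n + 1) div 2)"
proof -
  have "d dvd q ^ n + 1"
    using D by (simp add: D_set_def)
  then have "\<beta> ^ (q ^ n + 1) = 1"
    using primitive_root_pow_eq_1_iff[OF prim] by blast
  have "conjugate i * conjugate i ^ q ^ n = (\<beta> ^ q ^ (2 * i)) ^ (q ^ n + 1)"
    by (simp add: conjugate_def)
  also have "\<dots> = (\<beta> ^ (q ^ n + 1)) ^ q ^ (2 * i)"
    by (metis power_mult mult.commute)
  finally have "inverse (conjugate i) = conjugate i ^ q ^ n"
    using \<open>\<beta> ^ (q ^ n + 1) = 1\<close> by (metis inverse_unique power_one)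
  moreover have "2 * (i + (n + 1) div 2) = 2 * i + (n + 1)"
    using n_odd by simp
  ultimately show ?thesis
    unfolding conjugate_def by (simp add: power_add mult_ac flip: power_mult)
qed

lemma conjugate_in_orbit: "conjugate i \<in> orbit"
proof -
  have "conjugate i = conjugate (i mod n)"
    by (simp add: conjugate_eq_iff cong_def)
  then show ?thesis
    using n_pos by (simp add: orbit_def)
qed

lemma orbit_eq_range: "orbit = range conjugate"
  using conjugate_in_orbit by (auto simp: orbit_def)

lemma finite_orbit: "finite orbit"
  by (simp add: orbit_def)

lemma inj_on_conjugate: "inj_on conjugate {..<n}"
  by (rule inj_onI) (simp add: conjugate_eq_iff cong_less_modulus_unique_nat)

lemma card_orbit: "card orbit = n"
  by (simp add: orbit_def card_image[OF inj_on_conjugate])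

lemma beta_in_orbit: "\<beta> \<in> orbit"
  using conjugate_in_orbit[of 0] by (simp add: conjugate_def)

lemma zero_notin_orbit: "0 \<notin> orbit"
  using prim by (auto simp: orbit_def conjugate_def primitive_root_def power_0_left)

lemma orbit_roots_of_unity:
  assumes "x \<in> orbit"
  shows "x ^ d = 1"
proof -
  obtain i where "x = \<beta> ^ q ^ (2 * i)"
    using assms by (auto simp: orbit_def conjugate_def)
  then have "x ^ d = (\<beta> ^ d) ^ q ^ (2 * i)"
    by (metis power_mult mult.commute)
  then show ?thesis
    using prim by (simp add: primitive_root_def)
qed

lemma power_orbit_subset: "(\<lambda>x. x ^ q ^ 2) ` orbit \<subseteq> orbit"
  by (auto simp: orbit_eq_range conjugate_Suc)

lemma inverse_power_orbit_subset: "(\<lambda>x. inverse x ^ q) ` orbit \<subseteq> orbit"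
  by (auto simp: orbit_eq_range inverse_conjugate_power)

lemma prod_conjugates_eq: "(\<Prod>i<n. [:- (\<beta> ^ (q ^ (2 * i))), 1:]) = (\<Prod>x\<in>orbit. [:- x, 1:])"
  using prod.reindex[OF inj_on_conjugate, of "\<lambda>x. [:- x, 1:]"] by (simp add: orbit_def conjugate_def)

lemma card_orbit_le_degree:
  assumes "P \<noteq> 0" and "poly P \<beta> = 0" and stable: "\<And>x. poly P x = 0 \<Longrightarrow> poly P (x ^ q ^ 2) = 0"
  shows "n \<le> degree P"
proof -
  have "poly P (conjugate i) = 0" for i
  proof (induction i)
    case 0
    then show ?case using assms(2) by (simp add: conjugate_def)
  next
    case (Suc i)
    then show ?case using stable by (simp flip: conjugate_Suc)
  qed
  then have "orbit \<subseteq> {x. poly P x = 0}"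
    by (auto simp: orbit_def)
  then have "card orbit \<le> card {x. poly P x = 0}"
    by (rule card_mono[OF poly_roots_finite[OF \<open>P \<noteq> 0\<close>]])
  then show ?thesis
    using card_poly_roots_bound[OF \<open>P \<noteq> 0\<close>] card_orbit by simp
qed

end

locale scrim_setting = conjugate_orbit q n d \<beta>
  for q n d :: nat and \<beta> :: "'b::field" +
  fixes emb :: "'a::{field,finite} \<Rightarrow> 'b"
  assumes emb: "field_hom emb" and card: "CARD('a) = q ^ 2"
    and frob: "field_hom (\<lambda>x :: 'b. x ^ q)"
begin

lemma field_hom_power_CARD: "field_hom (\<lambda>x :: 'b. x ^ CARD('a))"
proof -
  interpret field_hom "\<lambda>x :: 'b. x ^ q" by (rule frob)
  show ?thesis
    by unfold_locales (simp_all add: card power2_eq_square power_mult hom_add hom_mult)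
qed

theorem ex_SCRIM:
  "\<exists>g. map_poly emb g = (\<Prod>x\<in>orbit. [:- x, 1:]) \<and> SCRIM q g \<and> degree g = n \<and> poly_ord g = d"
proof -
  interpret e: field_hom emb by (rule emb)
  interpret frobenius: field_hom "\<lambda>x :: 'b. x ^ CARD('a)" by (rule field_hom_power_CARD)
  let ?G = "\<Prod>x\<in>orbit. [:- x, 1:]"
  have "inj_on (\<lambda>x :: 'b. x ^ CARD('a)) orbit"
    using frobenius.inj_f by (rule inj_on_subset) simp
  then have "map_poly (\<lambda>x. x ^ CARD('a)) ?G = ?G"
    using map_poly_prod_linear[OF field_hom_power_CARD, of "\<lambda>x. x" orbit]
      prod_linear_eq_if_maps_into[OF finite_orbit _ power_orbit_subset[folded card]] by simp
  then obtain g where g: "map_poly emb g = ?G"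
    using ex_map_poly_eq_if_fixed_by_power_CARD[OF emb] by blast
  have "degree g = n"
    using degree_prod_linear[OF finite_orbit] card_orbit e.degree_map_poly_hom[of g] g by simp
  have "lead_coeff g = 1"
    using e.hom_lead_coeff[of g] g by (simp add: lead_coeff_prod)
  have "Polynomial.coeff g 0 \<noteq> 0"
    using arg_cong[OF g, of "\<lambda>P. Polynomial.coeff P 0"] zero_notin_orbit finite_orbit
    by (auto simp: coeff_0_prod_linear coeff_map_poly prod_zero_iff)
  have "irreducible g"
  proof (rule irreducible_if_minimal_root_degree[OF emb])
    show "0 < degree g"
      using n_pos \<open>degree g = n\<close> by simp
    show "poly (map_poly emb g) \<beta> = 0"
      using beta_in_orbit finite_orbit by (simp add: g poly_prod prod_zero_iff)
    show "degree g \<le> degree a" if "a \<noteq> 0" and "poly (map_poly emb a) \<beta> = 0" for a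
      using card_orbit_le_degree[of "map_poly emb a"]
        poly_map_poly_root_power_CARD[OF emb field_hom_power_CARD] that card \<open>degree g = n\<close> by simp
  qed
  moreover have "conj_recip q g = g"
    by (rule conj_recip_eq_self_if_closed[OF emb frob finite_orbit zero_notin_orbit
          inverse_power_orbit_subset g])
  moreover have "poly_ord g = d"
    by (rule poly_ord_eq_if_splits_into_roots_of_unity[OF emb g finite_orbit beta_in_orbit prim])
      (simp add: orbit_roots_of_unity)
  ultimately show ?thesis
    using g \<open>degree g = n\<close> \<open>lead_coeff g = 1\<close> \<open>Polynomial.coeff g 0 \<noteq> 0\<close>
    by (auto simp: SCRIM_def)
qed

end

theorem mainTheorem8:
  fixes emb :: "'a::{field,finite} \<Rightarrow> 'b::field"
    and q n d p k :: nat and \<beta> :: 'b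
  assumes "prime p" and "0 < k" and "q = p ^ k"
    and "card (UNIV :: 'a set) = q ^ 2"
    and "emb 1 = 1" and "\<And>x y. emb (x + y) = emb x + emb y"
    and "\<And>x y. emb (x * y) = emb x * emb y"
    and "odd n" and "3 \<le> n"
    and "d \<in> D_set q n"
    and "primitive_root d \<beta>"
  shows "\<exists>g :: 'a poly.
           map_poly emb g = (\<Prod>i<n. [:- (\<beta> ^ (q ^ (2 * i))), 1:])
         \<and> SCRIM q g \<and> degree g = n \<and> poly_ord g = d"
proof -
  have emb: "field_hom emb"
    by (rule field_hom_of_add_mult) (fact assms)+
  have "CHAR('a) = p"
    using CHAR_eq_if_CARD_eq_prime_power[OF \<open>prime p\<close>, of "2 * k"] assms(3,4)
    by (simp add: power_mult mult.commute)
  then have "CHAR('b) = p"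
    using CHAR_eq_if_field_hom[OF emb] by simp
  then have "field_hom (\<lambda>x :: 'b. x ^ q)"
    using field_hom_power_CHAR_power[where 'b = 'b, of q k] assms(1,3) by simp
  then interpret scrim_setting q n d \<beta> emb
    using assms emb by (simp add: scrim_setting_def scrim_setting_axioms_def conjugate_orbit_def)
  show ?thesis
    using ex_SCRIM by (simp add: prod_conjugates_eq)
qed

end
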